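(* If TDS is decidable, then for every integer $k>2$ the membership problem of the middle-$k$th Cantor set (given a rational $t\in[0,1]$, decide whether $t$ belongs to the middle-$k$th Cantor set) is decidable.
   Context: An instance of TDS consists of a rational discount factor $0<\lambda<1$, a rational target $t$, and rational weights $a,b$; it asks whether there exists $w\in\{a,b\}^\omega$ with $\sum_{i=0}^\infty w(i)\lambda^i=t$. For an integer $k>2$, the middle-$k$th Cantor set is obtained by starting with $[0,1]$ and, at each step, removing from each remaining closed interval the open middle subinterval whose length is $\frac1k$ of that interval's length (leaving two closed intervals each of relative length $\frac{k-1}{2k}$); the set is the intersection of all stages. *)

theory Defs
  imports Complex_Main "HOL-Library.Nat_Bijection"
begin

datatype recf = Zero | Succ | Proj nat | Comp recf "recf list" | Prim recf recf | Mn recf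

inductive eval :: "recf \<Rightarrow> nat list \<Rightarrow> nat \<Rightarrow> bool" where
  zero: "eval Zero xs 0"
| succ: "eval Succ xs (Suc (hd xs))"
| proj: "eval (Proj i) xs (xs ! i)"
| comp: "list_all2 (\<lambda>g z. eval g xs z) gs zs \<Longrightarrow> eval f zs y \<Longrightarrow> eval (Comp f gs) xs y"
| prim0: "eval f xs y \<Longrightarrow> eval (Prim f g) (0 # xs) y"
| primS: "eval (Prim f g) (n # xs) r \<Longrightarrow> eval g (n # r # xs) y \<Longrightarrow> eval (Prim f g) (Suc n # xs) y"
| mn: "eval f (n # xs) 0 \<Longrightarrow> (\<forall>m<n. \<exists>y. eval f (m # xs) y \<and> y > 0) \<Longrightarrow> eval (Mn f) xs n"

definition rat_code :: "rat \<Rightarrow> nat" where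
  "rat_code r = (case quotient_of r of (p, q) \<Rightarrow> prod_encode (int_encode p, nat q))"

definition decidable_on :: "'a set \<Rightarrow> ('a \<Rightarrow> nat) \<Rightarrow> ('a \<Rightarrow> bool) \<Rightarrow> bool" where
  "decidable_on I enc P \<longleftrightarrow> (\<exists>f. \<forall>x\<in>I. eval f [enc x] (if P x then 1 else 0))"

definition tds_instances :: "(rat \<times> rat \<times> rat \<times> rat) set" where
  "tds_instances = {(l, t, a, b). 0 < l \<and> l < 1}"

definition tds_code :: "rat \<times> rat \<times> rat \<times> rat \<Rightarrow> nat" where
  "tds_code = (\<lambda>(l, t, a, b). prod_encode (rat_code l, prod_encode (rat_code t,
                  prod_encode (rat_code a, rat_code b))))"

definition tds_yes :: "rat \<times> rat \<times> rat \<times> rat \<Rightarrow> bool" where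
  "tds_yes = (\<lambda>(l, t, a, b). \<exists>w :: nat \<Rightarrow> rat. (\<forall>i. w i \<in> {a, b}) \<and>
                  (\<lambda>i. real_of_rat (w i) * real_of_rat l ^ i) sums real_of_rat t)"

definition TDS_decidable :: bool where
  "TDS_decidable \<longleftrightarrow> decidable_on tds_instances tds_code tds_yes"

fun cantor_stage :: "nat \<Rightarrow> nat \<Rightarrow> (real \<times> real) set" where
  "cantor_stage k 0 = {(0, 1)}"
| "cantor_stage k (Suc n) = (\<Union>(a, b)\<in>cantor_stage k n.
      {(a, a + (b - a) * ((real k - 1) / (2 * real k))),
       (b - (b - a) * ((real k - 1) / (2 * real k)), b)})"

definition middle_kth_cantor :: "nat \<Rightarrow> real set" where
  "middle_kth_cantor k = (\<Inter>n. \<Union>(a, b)\<in>cantor_stage k n. {a..b})"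

definition cantor_membership_decidable :: "nat \<Rightarrow> bool" where
  "cantor_membership_decidable k \<longleftrightarrow>
     decidable_on {t :: rat. 0 \<le> t \<and> t \<le> 1} rat_code
       (\<lambda>t. real_of_rat t \<in> middle_kth_cantor k)"

end

theory Submission imports Defs begin

text \<open>With \<open>L = (k - 1) / (2 k)\<close>, the \<open>n\<close>-th stage of the middle-\<open>k\<close>th Cantor construction consists
  of the intervals \<open>[a, a + L^n]\<close> with \<open>a = \<Sum>i<n. d i * L^i\<close> and digits \<open>d i \<in> {0, 1 - L}\<close>.
  Hence every digit expansion \<open>\<Sum> d i * L^i\<close> lies in the Cantor set; conversely, since \<open>L < 1 - L\<close>,
  a point of the Cantor set lies in exactly one of the two first-level intervals, and reading off
  the digits greedily yields an expansion. So \<open>t\<close> belongs to the set iff the TDS instance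
  \<open>(L, t, 0, 1 - L)\<close> is positive, and this instance is computed from \<open>t\<close> by a fixed recursive
  function.\<close>

lemma eval_Comp_unary: "eval g xs z \<Longrightarrow> eval f [z] y \<Longrightarrow> eval (Comp f [g]) xs y"
  by (rule eval.comp) auto

lemma eval_Comp_binary:
  "eval g1 xs z1 \<Longrightarrow> eval g2 xs z2 \<Longrightarrow> eval f [z1, z2] y \<Longrightarrow> eval (Comp f [g1, g2]) xs y"
  by (rule eval.comp) auto

lemma eval_Proj: "xs ! i = v \<Longrightarrow> eval (Proj i) xs v"
  using eval.proj[of i xs] by simp

lemma eval_Succ: "eval Succ [n] (Suc n)"
  using eval.succ[of "[n]"] by simp

lemma decidable_on_reduction:
  assumes "decidable_on I enc P"
    and "\<And>x. x \<in> J \<Longrightarrow> eval r [enc' x] (enc (h x))"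
    and "\<And>x. x \<in> J \<Longrightarrow> h x \<in> I"
    and "\<And>x. x \<in> J \<Longrightarrow> Q x \<longleftrightarrow> P (h x)"
  shows "decidable_on J enc' Q"
proof -
  obtain f where f: "\<forall>y\<in>I. eval f [enc y] (if P y then 1 else 0)"
    using assms(1) unfolding decidable_on_def by blast
  have "eval (Comp f [r]) [enc' x] (if Q x then 1 else 0)" if "x \<in> J" for x
  proof (rule eval_Comp_unary)
    show "eval r [enc' x] (enc (h x))"
      using assms(2) that .
    show "eval f [enc (h x)] (if Q x then 1 else 0)"
      using f assms(3,4) that by simp
  qed
  then show ?thesis
    unfolding decidable_on_def by blast
qed

primrec const_recf :: "nat \<Rightarrow> recf" where
  "const_recf 0 = Zero"
| "const_recf (Suc n) = Comp Succ [const_recf n]"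

lemma eval_const_recf: "eval (const_recf c) xs c"
  by (induction c) (auto intro: eval_Comp_unary eval_Succ eval.zero)

definition add_recf :: recf where
  "add_recf = Prim (Proj 0) (Comp Succ [Proj 1])"

lemma eval_add_recf: "eval add_recf [m, n] (m + n)"
proof (induction m)
  case 0
  show ?case
    unfolding add_recf_def by (auto intro!: eval.prim0 eval_Proj)
next
  case (Suc m)
  show ?case
    unfolding add_recf_def
    by (rule eval.primS[OF Suc[unfolded add_recf_def]])
      (auto intro!: eval_Comp_unary eval_Proj eval_Succ)
qed

definition triangle_recf :: recf where
  "triangle_recf = Prim Zero (Comp add_recf [Proj 1, Comp Succ [Proj 0]])"

lemma eval_triangle_recf: "eval triangle_recf [n] (triangle n)"
proof (induction n)
  case 0
  show ?case
    unfolding triangle_recf_def by (auto intro!: eval.prim0 eval.zero)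
next
  case (Suc n)
  have "eval triangle_recf [Suc n] (triangle n + Suc n)"
    unfolding triangle_recf_def
    by (rule eval.primS[OF Suc[unfolded triangle_recf_def]])
      (auto intro!: eval_Comp_binary eval_Comp_unary eval_Proj eval_Succ
        eval_add_recf[of "triangle n" "Suc n", simplified])
  then show ?case
    by simp
qed

definition prod_encode_recf :: recf where
  "prod_encode_recf = Comp add_recf [Comp triangle_recf [Comp add_recf [Proj 0, Proj 1]], Proj 0]"

lemma eval_prod_encode_recf: "eval prod_encode_recf [m, n] (prod_encode (m, n))"
  unfolding prod_encode_recf_def prod_encode_def
  by (auto intro!: eval_Comp_binary eval_Comp_unary eval_Proj eval_triangle_recf eval_add_recf)

definition tds_code_recf :: "rat \<Rightarrow> rat \<Rightarrow> rat \<Rightarrow> recf" where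
  "tds_code_recf l a b = Comp prod_encode_recf [const_recf (rat_code l),
     Comp prod_encode_recf [Proj 0, const_recf (prod_encode (rat_code a, rat_code b))]]"

lemma eval_tds_code_recf: "eval (tds_code_recf l a b) [rat_code t] (tds_code (l, t, a, b))"
  unfolding tds_code_recf_def tds_code_def
  by (auto intro!: eval_Comp_binary eval_Proj eval_const_recf eval_prod_encode_recf)

definition cantor_digit_sums :: "real \<Rightarrow> nat \<Rightarrow> real set" where
  "cantor_digit_sums L n = {\<Sum>i<n. d i * L^i | d. \<forall>i. d i \<in> {0, 1 - L}}"

definition cantor_level :: "real \<Rightarrow> nat \<Rightarrow> real set" where
  "cantor_level L n = (\<Union>a\<in>cantor_digit_sums L n. {a..a + L^n})"

definition cantor_set :: "real \<Rightarrow> real set" where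
  "cantor_set L = (\<Inter>n. cantor_level L n)"

lemma cantor_digit_sums_0: "cantor_digit_sums L 0 = {0}"
  unfolding cantor_digit_sums_def by (auto intro!: exI[of _ "\<lambda>_. 0"])

lemma cantor_digit_sums_Suc_last:
  "cantor_digit_sums L (Suc n) = (\<Union>a\<in>cantor_digit_sums L n. {a, a + (1 - L) * L^n})"
proof (intro set_eqI iffI)
  fix x assume "x \<in> cantor_digit_sums L (Suc n)"
  then obtain d where d: "\<forall>i. d i \<in> {0, 1 - L}" "x = (\<Sum>i<n. d i * L^i) + d n * L^n"
    unfolding cantor_digit_sums_def by auto
  have "(\<Sum>i<n. d i * L^i) \<in> cantor_digit_sums L n"
    using d(1) unfolding cantor_digit_sums_def by blast
  then show "x \<in> (\<Union>a\<in>cantor_digit_sums L n. {a, a + (1 - L) * L^n})"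
    using d(1)[rule_format, of n] d(2) by auto
next
  fix x assume "x \<in> (\<Union>a\<in>cantor_digit_sums L n. {a, a + (1 - L) * L^n})"
  then obtain d c where d: "\<forall>i. d i \<in> {0, 1 - L}" "c \<in> {0, 1 - L}"
    and x: "x = (\<Sum>i<n. d i * L^i) + c * L^n"
    unfolding cantor_digit_sums_def by fastforce
  have "(\<Sum>i<n. (d(n := c)) i * L^i) = (\<Sum>i<n. d i * L^i)"
    by (intro sum.cong) auto
  then have "x = (\<Sum>i<Suc n. (d(n := c)) i * L^i)"
    using x by simp
  moreover have "\<forall>i. (d(n := c)) i \<in> {0, 1 - L}"
    using d by auto
  ultimately show "x \<in> cantor_digit_sums L (Suc n)"
    unfolding cantor_digit_sums_def by blast
qed

lemma cantor_digit_sums_Suc_first: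
  "cantor_digit_sums L (Suc n) = (\<Union>c\<in>{0, 1 - L}. (\<lambda>a. c + L * a) ` cantor_digit_sums L n)"
proof -
  have shift: "(\<Sum>i<Suc n. d i * L^i) = d 0 + L * (\<Sum>i<n. d (Suc i) * L^i)" for d
    by (simp only: sum.lessThan_Suc_shift) (simp add: sum_distrib_left algebra_simps)
  show ?thesis
  proof (intro set_eqI iffI)
    fix x assume "x \<in> cantor_digit_sums L (Suc n)"
    then obtain d where d: "\<forall>i. d i \<in> {0, 1 - L}" "x = d 0 + L * (\<Sum>i<n. d (Suc i) * L^i)"
      unfolding cantor_digit_sums_def shift by blast
    have "(\<Sum>i<n. d (Suc i) * L^i) \<in> cantor_digit_sums L n"
      unfolding cantor_digit_sums_def using d(1) by (auto intro!: exI[of _ "\<lambda>i. d (Suc i)"])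
    then show "x \<in> (\<Union>c\<in>{0, 1 - L}. (\<lambda>a. c + L * a) ` cantor_digit_sums L n)"
      using d by blast
  next
    fix x assume "x \<in> (\<Union>c\<in>{0, 1 - L}. (\<lambda>a. c + L * a) ` cantor_digit_sums L n)"
    then obtain d c where d: "\<forall>i. d i \<in> {0, 1 - L}" "c \<in> {0, 1 - L}"
      and x: "x = c + L * (\<Sum>i<n. d i * L^i)"
      unfolding cantor_digit_sums_def by blast
    have "x = (\<Sum>i<Suc n. case_nat c d i * L^i)"
      unfolding shift x by simp
    moreover have "\<forall>i. case_nat c d i \<in> {0, 1 - L}"
      using d by (auto split: nat.split)
    ultimately show "x \<in> cantor_digit_sums L (Suc n)"
      unfolding cantor_digit_sums_def by blast
  qed
qed

lemma cantor_stage_eq_digit_sums: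
  assumes "L = (real k - 1) / (2 * real k)"
  shows "cantor_stage k n = (\<lambda>a. (a, a + L^n)) ` cantor_digit_sums L n"
proof (induction n)
  case 0
  show ?case
    by (simp add: cantor_digit_sums_0)
next
  case (Suc n)
  have children: "{(a, a + (a + L^n - a) * L), (a + L^n - (a + L^n - a) * L, a + L^n)}
     = {(a, a + L^Suc n), (a + (1 - L) * L^n, a + (1 - L) * L^n + L^Suc n)}" for a
    by (auto simp: algebra_simps)
  have "cantor_stage k (Suc n) = (\<Union>a\<in>cantor_digit_sums L n.
      {(a, a + (a + L^n - a) * L), (a + L^n - (a + L^n - a) * L, a + L^n)})"
    using Suc by (simp add: assms[symmetric])
  also have "\<dots> = (\<Union>a\<in>cantor_digit_sums L n.
      {(a, a + L^Suc n), (a + (1 - L) * L^n, a + (1 - L) * L^n + L^Suc n)})"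
    by (simp only: children)
  also have "\<dots> = (\<lambda>a. (a, a + L^Suc n)) ` cantor_digit_sums L (Suc n)"
    unfolding cantor_digit_sums_Suc_last by auto
  finally show ?case .

qed

lemma middle_kth_cantor_eq_cantor_set:
  "middle_kth_cantor k = cantor_set ((real k - 1) / (2 * real k))"
  unfolding middle_kth_cantor_def cantor_set_def cantor_level_def
  by (auto simp: cantor_stage_eq_digit_sums)

lemma cantor_level_Suc:
  assumes "0 < L"
  shows "t \<in> cantor_level L (Suc n) \<longleftrightarrow>
           t / L \<in> cantor_level L n \<or> (t - (1 - L)) / L \<in> cantor_level L n"
proof -
  have rescale: "(c + L * a \<le> t \<and> t \<le> c + L * a + L ^ Suc n) \<longleftrightarrow>
      (a \<le> (t - c) / L \<and> (t - c) / L \<le> a + L^n)" for a c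
    using assms by (auto simp: field_simps)
  show ?thesis
    unfolding cantor_level_def cantor_digit_sums_Suc_first
    using rescale[of 0] rescale[of "1 - L"] by auto
qed

lemma cantor_level_subset:
  assumes "0 < L" "L < 1"
  shows "cantor_level L n \<subseteq> {0..1}"
proof (induction n)
  case 0
  show ?case
    by (simp add: cantor_level_def cantor_digit_sums_0)
next
  case (Suc n)
  have "t / L \<in> {0..1} \<Longrightarrow> t \<in> {0..1}" "(t - (1 - L)) / L \<in> {0..1} \<Longrightarrow> t \<in> {0..1}" for t
    using assms by (auto simp: field_simps)
  then show ?case
    using Suc cantor_level_Suc[OF assms(1)] by blast
qed

lemma sums_in_cantor_set:
  assumes "0 < L" "L < 1" "\<forall>i. d i \<in> {0, 1 - L}" "(\<lambda>i. d i * L^i) sums t"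
  shows "t \<in> cantor_set L"
  unfolding cantor_set_def
proof
  fix n
  define a where "a = (\<Sum>i<n. d i * L^i)"
  have "a \<in> cantor_digit_sums L n"
    unfolding cantor_digit_sums_def a_def using assms(3) by blast
  have tail: "(\<lambda>i. d (i + n) * L^(i + n)) sums (t - a)"
    using sums_iff_shift[of "\<lambda>i. d i * L^i" n "t - a"] assms(4) unfolding a_def by simp
  have "(\<lambda>i. (1 - L) * L^n * L^i) sums ((1 - L) * L^n * (1 / (1 - L)))"
    by (intro sums_mult geometric_sums) (use assms in simp)
  then have geometric_tail: "(\<lambda>i. (1 - L) * L^(i + n)) sums (L^n)"
    using assms(2) by (simp add: power_add mult_ac)
  have digit_bounds: "0 \<le> d (i + n) * L^(i + n) \<and> d (i + n) * L^(i + n) \<le> (1 - L) * L^(i + n)" for i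
    using assms(1,2) assms(3)[rule_format, of "i + n"] by auto
  have "0 \<le> t - a" "t - a \<le> L^n"
    using sums_le[OF _ sums_zero tail] sums_le[OF _ tail geometric_tail] digit_bounds by auto
  then show "t \<in> cantor_level L n"
    unfolding cantor_level_def using \<open>a \<in> cantor_digit_sums L n\<close> by auto
qed

definition cantor_digit :: "real \<Rightarrow> real \<Rightarrow> real" where
  "cantor_digit L t = (if t \<le> L then 0 else 1 - L)"

definition cantor_shift :: "real \<Rightarrow> real \<Rightarrow> real" where
  "cantor_shift L t = (t - cantor_digit L t) / L"

text \<open>Here \<open>L < 1/2\<close> is used: the two first-level intervals \<open>[0, L]\<close> and \<open>[1 - L, 1]\<close> are disjoint,
  so the branch chosen at level \<open>n + 1\<close> is the same for all \<open>n\<close>.\<close>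
lemma cantor_shift_in_cantor_set:
  assumes "0 < L" "L < 1/2" "t \<in> cantor_set L"
  shows "cantor_shift L t \<in> cantor_set L"
proof -
  have left: "t \<le> L" if "t / L \<in> cantor_level L n" for n
    using that cantor_level_subset[of L n] assms(1,2) by (auto simp: field_simps)
  have right: "1 - L \<le> t" if "(t - (1 - L)) / L \<in> cantor_level L n" for n
    using that cantor_level_subset[of L n] assms(1,2) by (auto simp: field_simps)
  have "t / L \<in> cantor_level L n \<or> (t - (1 - L)) / L \<in> cantor_level L n" for n
    using assms(3) cantor_level_Suc[OF assms(1)] unfolding cantor_set_def by blast
  then have "cantor_shift L t \<in> cantor_level L n" for n
    using left right assms(2) unfolding cantor_shift_def cantor_digit_def
    by (cases "t \<le> L") fastforce+
  then show ?thesis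
    unfolding cantor_set_def by blast
qed

lemma sums_of_digit_recurrence:
  fixes L :: real
  assumes "\<And>n. x n = d n + L * x (Suc n)" "\<And>n. \<bar>x n\<bar> \<le> B" "\<bar>L\<bar> < 1"
  shows "(\<lambda>i. d i * L^i) sums x 0"
proof -
  have partial_sums: "x 0 = (\<Sum>i<n. d i * L^i) + L^n * x n" for n
  proof (induction n)
    case (Suc n)
    then show ?case
      using assms(1)[of n] by (simp add: algebra_simps)
  qed simp
  have "(\<lambda>n. L^n * x n) \<longlonglongrightarrow> 0"
  proof (rule tendsto_0_le[OF LIMSEQ_power_zero[of L], where K = B])
    show "\<forall>\<^sub>F n in sequentially. norm (L^n * x n) \<le> norm (L^n) * B"
      using assms(2) by (simp add: abs_mult mult_left_mono)
  qed (use assms(3) in simp)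
  then have "(\<lambda>n. x 0 - L^n * x n) \<longlonglongrightarrow> x 0"
    using tendsto_diff[OF tendsto_const] by fastforce
  moreover have "(\<lambda>n. x 0 - L^n * x n) = (\<lambda>n. \<Sum>i<n. d i * L^i)"
    using partial_sums by (metis add_diff_cancel_right')
  ultimately show ?thesis
    unfolding sums_def by simp
qed

lemma cantor_set_has_expansion:
  assumes "0 < L" "L < 1/2" "t \<in> cantor_set L"
  shows "\<exists>d. (\<forall>i. d i \<in> {0, 1 - L}) \<and> (\<lambda>i. d i * L^i) sums t"
proof -
  define x where "x n = (cantor_shift L ^^ n) t" for n
  have x_in: "x n \<in> cantor_set L" for n
    by (induction n) (simp_all add: x_def assms(3) cantor_shift_in_cantor_set[OF assms(1,2)])
  have bound: "\<bar>x n\<bar> \<le> 1" for n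
    using x_in[of n] cantor_level_subset[of L 0] assms(1,2) unfolding cantor_set_def by auto
  have recurrence: "x n = cantor_digit L (x n) + L * x (Suc n)" for n
    using assms(1) by (simp add: x_def cantor_shift_def)
  have "(\<lambda>i. cantor_digit L (x i) * L^i) sums x 0"
    by (rule sums_of_digit_recurrence[of x "\<lambda>i. cantor_digit L (x i)" L 1, OF recurrence bound]) (use assms(1,2) in simp)
  moreover have "\<forall>i. cantor_digit L (x i) \<in> {0, 1 - L}"
    by (simp add: cantor_digit_def)
  ultimately show ?thesis
    unfolding x_def by auto
qed

lemma cantor_set_iff_expansion:
  assumes "0 < L" "L < 1/2"
  shows "t \<in> cantor_set L \<longleftrightarrow> (\<exists>d. (\<forall>i. d i \<in> {0, 1 - L}) \<and> (\<lambda>i. d i * L^i) sums t)"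
  using assms cantor_set_has_expansion sums_in_cantor_set by force

lemma middle_kth_cantor_iff_tds_yes:
  fixes t :: rat
  assumes "k > 2"
  defines "l \<equiv> (of_nat k - 1) / (2 * of_nat k) :: rat"
  shows "real_of_rat t \<in> middle_kth_cantor k \<longleftrightarrow> tds_yes (l, t, 0, 1 - l)"
proof -
  define L where "L = real_of_rat l"
  have L: "L = (real k - 1) / (2 * real k)"
    unfolding L_def l_def by (simp add: of_rat_divide of_rat_diff of_rat_mult)
  have "0 < L" "L < 1/2"
    using assms(1) unfolding L by (auto simp: field_simps)
  have rational_digits:
    "(\<exists>w. (\<forall>i. w i \<in> {0, 1 - l}) \<and> (\<lambda>i. real_of_rat (w i) * L^i) sums real_of_rat t) \<longleftrightarrow>
     (\<exists>d. (\<forall>i. d i \<in> {0, 1 - L}) \<and> (\<lambda>i. d i * L^i) sums real_of_rat t)"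
  proof
    assume "\<exists>w. (\<forall>i. w i \<in> {0, 1 - l}) \<and> (\<lambda>i. real_of_rat (w i) * L^i) sums real_of_rat t"
    then obtain w where "\<forall>i. w i \<in> {0, 1 - l}" "(\<lambda>i. real_of_rat (w i) * L^i) sums real_of_rat t"
      by blast
    then show "\<exists>d. (\<forall>i. d i \<in> {0, 1 - L}) \<and> (\<lambda>i. d i * L^i) sums real_of_rat t"
      by (intro exI[of _ "\<lambda>i. real_of_rat (w i)"]) (auto simp: L_def of_rat_diff)
  next
    assume "\<exists>d. (\<forall>i. d i \<in> {0, 1 - L}) \<and> (\<lambda>i. d i * L^i) sums real_of_rat t"
    then obtain d where d: "\<forall>i. d i \<in> {0, 1 - L}" "(\<lambda>i. d i * L^i) sums real_of_rat t"
      by blast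
    define w where "w i = (if d i = 0 then 0 else 1 - l)" for i
    have "real_of_rat (w i) = d i" for i
      using d(1) by (auto simp: w_def L_def of_rat_diff)
    then show "\<exists>w. (\<forall>i. w i \<in> {0, 1 - l}) \<and> (\<lambda>i. real_of_rat (w i) * L^i) sums real_of_rat t"
      using d(2) by (intro exI[of _ w]) (simp add: w_def)
  qed
  show ?thesis
    unfolding middle_kth_cantor_eq_cantor_set L[symmetric]
      cantor_set_iff_expansion[OF \<open>0 < L\<close> \<open>L < 1/2\<close>] tds_yes_def
    using rational_digits by (simp add: L_def)
qed

theorem theorem34:
  assumes "TDS_decidable"
  shows "\<forall>k::nat. k > 2 \<longrightarrow> cantor_membership_decidable k"
proof (intro allI impI)
  fix k :: nat
  assume "k > 2"
  define l :: rat where "l = (of_nat k - 1) / (2 * of_nat k)"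
  have "0 < l" "l < 1"
    using \<open>k > 2\<close> unfolding l_def by (auto simp: field_simps)
  show "cantor_membership_decidable k"
    unfolding cantor_membership_decidable_def
  proof (rule decidable_on_reduction[OF assms[unfolded TDS_decidable_def],
        where r = "tds_code_recf l 0 (1 - l)" and h = "\<lambda>t. (l, t, 0, 1 - l)"])
    fix t :: rat
    show "eval (tds_code_recf l 0 (1 - l)) [rat_code t] (tds_code (l, t, 0, 1 - l))"
      by (rule eval_tds_code_recf)
    show "(l, t, 0, 1 - l) \<in> tds_instances"
      using \<open>0 < l\<close> \<open>l < 1\<close> unfolding tds_instances_def by simp
    show "real_of_rat t \<in> middle_kth_cantor k \<longleftrightarrow> tds_yes (l, t, 0, 1 - l)"
      unfolding l_def by (rule middle_kth_cantor_iff_tds_yes[OF \<open>k > 2\<close>])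
  qed
qed

end
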